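(* Let $I=[a,b]$, $K_1,K_2\in C(I\times I,\mathbb{R})$, $h\in C(I,\mathbb{R})$, and let $f,g:I\times\mathbb{R}\to\mathbb{R}$ be continuous. Consider the integral equation $$x(t)=\int_a^b\big(K_1(t,s)+K_2(t,s)\big)\big(f(s,x(s))+g(s,x(s))\big)\,ds+h(t),\qquad t\in I.$$ Assume: (i) $K_1(t,s)\ge0$ and $K_2(t,s)\le0$ for all $t,s\in I$; (ii) there exist $\theta\in\Theta$ and positive numbers $\lambda,\mu$ such that for all $t\in I$ and all $x,y\in\mathbb{R}$ with $x\ge y$, $$0\le f(t,x)-f(t,y)\le\lambda\,\theta(x-y),\qquad -\mu\,\theta(x-y)\le g(t,x)-g(t,y)\le 0;$$ (iii) $(\lambda+\mu)\cdot\sup_{t\in I}\int_a^b\big[K_1(t,s)-K_2(t,s)\big]ds\le 1$. If the equation admits a coupled lower-upper solution, then it has a unique solution in $C(I,\mathbb{R})$.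
   Context: $\Psi$ is the set of all functions $\psi:[0,\infty)\to[0,\infty)$ such that for every $r>0$ the limit $\lim_{t\to r}\psi(t)$ exists and is $>0$, and $\lim_{t\to0^+}\psi(t)=0$. $\Theta$ is the set of all functions $\theta:[0,\infty)\to[0,\infty)$ that are nondecreasing and for which there exists $\psi\in\Psi$ with $\theta(r)=\frac r2-\psi\!\left(\frac r2\right)$ for all $r\ge0$. A pair $(\alpha,\beta)$ of functions in $C(I,\mathbb{R})$ is a coupled lower-upper solution of the equation if for all $t\in I$: $$\alpha(t)\le\int_a^bK_1(t,s)[f(s,\alpha(s))+g(s,\beta(s))]ds+\int_a^bK_2(t,s)[f(s,\beta(s))+g(s,\alpha(s))]ds+h(t),$$ $$\beta(t)\ge\int_a^bK_1(t,s)[f(s,\beta(s))+g(s,\alpha(s))]ds+\int_a^bK_2(t,s)[f(s,\alpha(s))+g(s,\beta(s))]ds+h(t).$$ *)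

theory Defs
  imports "HOL-Analysis.Analysis"
begin

text \<open>The class Psi: functions [0,oo) -> [0,oo) with a positive limit at every r > 0
  and limit 0 at 0 from the right.  Only values on [0,oo) matter.\<close>
definition Psi_class :: "(real \<Rightarrow> real) \<Rightarrow> bool" where
  "Psi_class \<psi> \<longleftrightarrow>
     (\<forall>t\<ge>0. \<psi> t \<ge> 0) \<and>
     (\<forall>r>0. \<exists>L>0. (\<psi> \<longlongrightarrow> L) (at r)) \<and>
     (\<psi> \<longlongrightarrow> 0) (at_right 0)"

definition Theta_class :: "(real \<Rightarrow> real) \<Rightarrow> bool" where
  "Theta_class \<theta> \<longleftrightarrow>
     (\<forall>r\<ge>0. \<theta> r \<ge> 0) \<and>
     mono_on {0..} \<theta> \<and>
     (\<exists>\<psi>. Psi_class \<psi> \<and> (\<forall>r\<ge>0. \<theta> r = r / 2 - \<psi> (r / 2)))"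

definition coupled_lower_upper ::
  "real \<Rightarrow> real \<Rightarrow> (real \<Rightarrow> real \<Rightarrow> real) \<Rightarrow> (real \<Rightarrow> real \<Rightarrow> real) \<Rightarrow>
   (real \<Rightarrow> real \<Rightarrow> real) \<Rightarrow> (real \<Rightarrow> real \<Rightarrow> real) \<Rightarrow> (real \<Rightarrow> real) \<Rightarrow>
   (real \<Rightarrow> real) \<Rightarrow> (real \<Rightarrow> real) \<Rightarrow> bool" where
  "coupled_lower_upper a b K1 K2 f g h \<alpha> \<beta> \<longleftrightarrow>
     continuous_on {a..b} \<alpha> \<and> continuous_on {a..b} \<beta> \<and>
     (\<forall>t\<in>{a..b}.
        \<alpha> t \<le> integral {a..b} (\<lambda>s. K1 t s * (f s (\<alpha> s) + g s (\<beta> s)))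
               + integral {a..b} (\<lambda>s. K2 t s * (f s (\<beta> s) + g s (\<alpha> s))) + h t \<and>
        \<beta> t \<ge> integral {a..b} (\<lambda>s. K1 t s * (f s (\<beta> s) + g s (\<alpha> s)))
               + integral {a..b} (\<lambda>s. K2 t s * (f s (\<alpha> s) + g s (\<beta> s))) + h t)"

definition is_solution ::
  "real \<Rightarrow> real \<Rightarrow> (real \<Rightarrow> real \<Rightarrow> real) \<Rightarrow> (real \<Rightarrow> real \<Rightarrow> real) \<Rightarrow>
   (real \<Rightarrow> real \<Rightarrow> real) \<Rightarrow> (real \<Rightarrow> real \<Rightarrow> real) \<Rightarrow> (real \<Rightarrow> real) \<Rightarrow>
   (real \<Rightarrow> real) \<Rightarrow> bool" where
  "is_solution a b K1 K2 f g h x \<longleftrightarrow>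
     continuous_on {a..b} x \<and>
     (\<forall>t\<in>{a..b}. x t = integral {a..b} (\<lambda>s. (K1 t s + K2 t s) * (f s (x s) + g s (x s))) + h t)"

end

theory Submission
  imports Defs
begin

(* Write the equation as the fixed-point problem x = T x for the Hammerstein
   operator  T x t = \<integral>_a^b K t s * F s (x s) ds + h t  with kernel K = K1 + K2 and
   nonlinearity F = f + g.  Every function of class Theta satisfies 0 \<le> \<theta> r \<le> r/2, so the
   monotonicity conditions on f and g make F Lipschitz in its second argument with constant
   (\<lambda> + \<mu>)/2.  Since |K1 + K2| \<le> K1 - K2 by the sign conditions on the kernels, condition (iii)
   turns T into a contraction with constant 1/2 for the supremum distance on C([a,b]).
   Banach's fixed-point theorem then yields existence and uniqueness. *)

text \<open>A function of class Theta is nonnegative and lies below the half-diagonal, because it is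
  r/2 minus a nonnegative function.  This is the only property of Theta the proof uses.\<close>
lemma Theta_class_bounds:
  assumes "Theta_class \<theta>" and "r \<ge> 0"
  shows "0 \<le> \<theta> r" and "\<theta> r \<le> r / 2"
  using assms unfolding Theta_class_def Psi_class_def by force+

lemma monotone_sum_lipschitz:
  fixes \<phi> \<gamma> \<theta> :: "real \<Rightarrow> real" and lam mu :: real
  assumes \<theta>: "\<And>r. r \<ge> 0 \<Longrightarrow> 0 \<le> \<theta> r \<and> \<theta> r \<le> r / 2"
    and \<phi>: "\<And>x y. y \<le> x \<Longrightarrow> 0 \<le> \<phi> x - \<phi> y \<and> \<phi> x - \<phi> y \<le> lam * \<theta> (x - y)"
    and \<gamma>: "\<And>x y. y \<le> x \<Longrightarrow> - mu * \<theta> (x - y) \<le> \<gamma> x - \<gamma> y \<and> \<gamma> x - \<gamma> y \<le> 0"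
    and lam: "lam \<ge> 0" and mu: "mu \<ge> 0"
  shows "\<bar>(\<phi> u + \<gamma> u) - (\<phi> v + \<gamma> v)\<bar> \<le> (lam + mu) / 2 * \<bar>u - v\<bar>"
proof -
  have ordered: "\<bar>(\<phi> x + \<gamma> x) - (\<phi> y + \<gamma> y)\<bar> \<le> (lam + mu) / 2 * (x - y)" if "y \<le> x" for x y
  proof -
    have "\<bar>(\<phi> x + \<gamma> x) - (\<phi> y + \<gamma> y)\<bar> \<le> (lam + mu) * \<theta> (x - y)"
      using \<phi>[OF that] \<gamma>[OF that] \<theta>[of "x - y"] that lam mu by (auto simp: abs_le_iff algebra_simps)
    also have "\<dots> \<le> (lam + mu) * ((x - y) / 2)"
      using \<theta>[of "x - y"] that lam mu by (intro mult_left_mono) auto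
    finally show ?thesis by simp
  qed
  show ?thesis
    using ordered[of v u] ordered[of u v] by (cases "v \<le> u") (auto simp: abs_minus_commute)
qed

section \<open>Banach's fixed-point principle on C([a,b])\<close>

text \<open>Clamping the argument to [a,b] extends a function that is continuous on [a,b] to a
  bounded continuous function on the whole line.\<close>
definition clamp :: "real \<Rightarrow> real \<Rightarrow> real \<Rightarrow> real" where
  "clamp a b t = max a (min b t)"

lemma clamp_in_interval: "a \<le> b \<Longrightarrow> clamp a b t \<in> {a..b}"
  and clamp_id: "t \<in> {a..b} \<Longrightarrow> clamp a b t = t"
  unfolding clamp_def by auto

lemma clamp_bcontfun:
  fixes x :: "real \<Rightarrow> 'b::metric_space"
  assumes ab: "a \<le> b" and xc: "continuous_on {a..b} x"
  shows "x \<circ> clamp a b \<in> bcontfun"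
proof -
  have range: "range (clamp a b) \<subseteq> {a..b}" using clamp_in_interval[OF ab] by auto
  have "continuous_on UNIV (clamp a b)" unfolding clamp_def by (intro continuous_intros)
  then have "continuous_on UNIV (x \<circ> clamp a b)"
    using continuous_on_compose continuous_on_subset[OF xc range] by blast
  moreover have "bounded (x ` {a..b})"
    by (intro compact_imp_bounded compact_continuous_image xc) simp
  then have "bounded (range (x \<circ> clamp a b))"
    by (rule bounded_subset) (use range in auto)
  ultimately show ?thesis by (simp add: bcontfun_def)
qed

lemma apply_clamp_bcontfun:
  fixes x :: "real \<Rightarrow> 'b::metric_space"
  assumes "a \<le> b" and "continuous_on {a..b} x"
  shows "apply_bcontfun (Bcontfun (x \<circ> clamp a b)) t = x (clamp a b t)"
  using clamp_bcontfun[OF assms] by (simp add: Bcontfun_inverse)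

lemma interval_contraction_fixed_point:
  fixes T :: "(real \<Rightarrow> 'b::complete_space) \<Rightarrow> real \<Rightarrow> 'b" and q :: real
  assumes ab: "a \<le> b" and q: "0 \<le> q" "q < 1"
    and cont: "\<And>x. continuous_on {a..b} x \<Longrightarrow> continuous_on {a..b} (T x)"
    and local: "\<And>x y t. (\<forall>s\<in>{a..b}. x s = y s) \<Longrightarrow> t \<in> {a..b} \<Longrightarrow> T x t = T y t"
    and contract: "\<And>x y d t. continuous_on {a..b} x \<Longrightarrow> continuous_on {a..b} y \<Longrightarrow>
                     (\<forall>s\<in>{a..b}. dist (x s) (y s) \<le> d) \<Longrightarrow> t \<in> {a..b} \<Longrightarrow>
                     dist (T x t) (T y t) \<le> q * d"
  shows "\<exists>x. continuous_on {a..b} x \<and> (\<forall>t\<in>{a..b}. x t = T x t) \<and>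
           (\<forall>y. continuous_on {a..b} y \<and> (\<forall>t\<in>{a..b}. y t = T y t) \<longrightarrow> (\<forall>t\<in>{a..b}. y t = x t))"
proof -
  have cont_bcontfun: "continuous_on {a..b} (apply_bcontfun u)" for u :: "real \<Rightarrow>\<^sub>C 'b"
    by (simp add: continuous_on_subset)
  define \<Phi> where "\<Phi> u = Bcontfun (T (apply_bcontfun u) \<circ> clamp a b)" for u :: "real \<Rightarrow>\<^sub>C 'b"
  have \<Phi>_apply: "apply_bcontfun (\<Phi> u) t = T (apply_bcontfun u) (clamp a b t)" for u t
    unfolding \<Phi>_def by (rule apply_clamp_bcontfun[OF ab cont[OF cont_bcontfun]])
  have lipschitz: "dist (\<Phi> u) (\<Phi> v) \<le> q * dist u v" for u v
  proof (rule dist_bound)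
    fix t
    have "\<forall>s\<in>{a..b}. dist (u s) (v s) \<le> dist u v" by (simp add: dist_bounded)
    then show "dist (\<Phi> u t) (\<Phi> v t) \<le> q * dist u v"
      unfolding \<Phi>_apply by (intro contract cont_bcontfun clamp_in_interval[OF ab])
  qed
  obtain u where fixed: "\<Phi> u = u" and unique: "\<And>w. \<Phi> w = w \<Longrightarrow> w = u"
    using banach_fix_type[OF q, of \<Phi>] lipschitz by metis
  have u_fixed: "u t = T u t" if "t \<in> {a..b}" for t
    using \<Phi>_apply[of u t] fixed clamp_id[OF that] by simp
  have "y t = u t" if yc: "continuous_on {a..b} y" and y_fixed: "\<forall>t\<in>{a..b}. y t = T y t"
    and t: "t \<in> {a..b}" for y t
  proof -
    define w where "w = Bcontfun (y \<circ> clamp a b)"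
    have w_apply: "apply_bcontfun w s = y (clamp a b s)" for s
      unfolding w_def by (rule apply_clamp_bcontfun[OF ab yc])
    have "T w s = y s" if s: "s \<in> {a..b}" for s
    proof -
      have "T w s = T y s" by (rule local[OF _ s]) (simp add: w_apply clamp_id)
      also have "\<dots> = y s" using y_fixed[rule_format, OF s] by (rule sym)
      finally show ?thesis .
    qed
    then have "\<Phi> w = w"
      by (intro bcontfun_eqI) (metis \<Phi>_apply w_apply clamp_in_interval[OF ab])
    then have "w = u" by (rule unique)
    then show ?thesis using w_apply[of t] clamp_id[OF t] by simp
  qed
  then show ?thesis using cont_bcontfun u_fixed by blast
qed

section \<open>The Hammerstein integral operator\<close>

definition hammerstein ::
  "real \<Rightarrow> real \<Rightarrow> (real \<Rightarrow> real \<Rightarrow> real) \<Rightarrow> (real \<Rightarrow> real \<Rightarrow> real) \<Rightarrow> (real \<Rightarrow> real) \<Rightarrow>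
   (real \<Rightarrow> real) \<Rightarrow> real \<Rightarrow> real" where
  "hammerstein a b K F h x t = integral {a..b} (\<lambda>s. K t s * F s (x s)) + h t"

lemma continuous_on_section:
  assumes "continuous_on (A \<times> B) (\<lambda>(t, s). G t s)" and "t \<in> A"
  shows "continuous_on B (G t)"
proof -
  have "continuous_on B (\<lambda>s. (t, s))" by (intro continuous_intros)
  moreover have "(\<lambda>s. (t, s)) ` B \<subseteq> A \<times> B" using assms(2) by auto
  ultimately show ?thesis using continuous_on_compose2[OF assms(1)] by fastforce
qed

lemma continuous_on_superposition:
  assumes Fc: "continuous_on (S \<times> UNIV) (\<lambda>(s, u). F s u)" and xc: "continuous_on S x"
  shows "continuous_on S (\<lambda>s. F s (x s))"
proof -
  have "continuous_on S (\<lambda>s. (s, x s))" by (intro continuous_intros xc)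
  moreover have "(\<lambda>s. (s, x s)) ` S \<subseteq> S \<times> UNIV" by auto
  ultimately show ?thesis using continuous_on_compose2[OF Fc] by fastforce
qed

lemma hammerstein_continuous:
  assumes Kc: "continuous_on ({a..b} \<times> {a..b}) (\<lambda>(t, s). K t s)"
    and Fc: "continuous_on ({a..b} \<times> UNIV) (\<lambda>(s, u). F s u)"
    and hc: "continuous_on {a..b} h" and xc: "continuous_on {a..b} x"
  shows "continuous_on {a..b} (hammerstein a b K F h x)"
proof -
  have "continuous_on ({a..b} \<times> {a..b}) snd" by (intro continuous_intros)
  moreover have "snd ` ({a..b} \<times> {a..b}) = {a..b}" by auto
  ultimately have "continuous_on ({a..b} \<times> {a..b}) ((\<lambda>s. F s (x s)) \<circ> snd)"
    using continuous_on_compose continuous_on_superposition[OF Fc xc] by metis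
  then have "continuous_on ({a..b} \<times> {a..b}) (\<lambda>(t, s). K t s * F s (x s))"
    using continuous_on_mult[OF Kc] by (simp add: case_prod_beta o_def)
  then have "continuous_on {a..b} (\<lambda>t. integral (cbox a b) (\<lambda>s. K t s * F s (x s)))"
    by (intro integral_continuous_on_param) (simp add: cbox_interval)
  then show ?thesis
    unfolding hammerstein_def using continuous_on_add[OF _ hc] by (simp add: cbox_interval)
qed

lemma hammerstein_local:
  assumes "\<forall>s\<in>{a..b}. x s = y s"
  shows "hammerstein a b K F h x t = hammerstein a b K F h y t"
  unfolding hammerstein_def using assms by (auto intro!: integral_cong)

lemma hammerstein_lipschitz:
  assumes Kc: "continuous_on ({a..b} \<times> {a..b}) (\<lambda>(t, s). K t s)"
    and Fc: "continuous_on ({a..b} \<times> UNIV) (\<lambda>(s, u). F s u)"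
    and xc: "continuous_on {a..b} x" and yc: "continuous_on {a..b} y" and t: "t \<in> {a..b}"
    and F_lip: "\<And>s u v. s \<in> {a..b} \<Longrightarrow> \<bar>F s u - F s v\<bar> \<le> c * \<bar>u - v\<bar>" and c: "c \<ge> 0"
    and K_dom: "\<And>s. s \<in> {a..b} \<Longrightarrow> \<bar>K t s\<bar> \<le> M s" and M: "M integrable_on {a..b}"
    and dist: "\<forall>s\<in>{a..b}. \<bar>x s - y s\<bar> \<le> d"
  shows "\<bar>hammerstein a b K F h x t - hammerstein a b K F h y t\<bar> \<le> c * d * integral {a..b} M"
proof -
  have integrable: "(\<lambda>s. K t s * F s (z s)) integrable_on {a..b}" if "continuous_on {a..b} z" for z
    by (intro integrable_continuous_interval continuous_on_mult
        continuous_on_section[OF Kc t] continuous_on_superposition[OF Fc that])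
  have pointwise: "\<bar>K t s * F s (x s) - K t s * F s (y s)\<bar> \<le> M s * (c * d)" if s: "s \<in> {a..b}" for s
  proof -
    have "\<bar>F s (x s) - F s (y s)\<bar> \<le> c * d"
      using F_lip[OF s, of "x s" "y s"] mult_left_mono[OF dist[rule_format, OF s] c] by linarith
    then have "\<bar>K t s\<bar> * \<bar>F s (x s) - F s (y s)\<bar> \<le> M s * (c * d)"
      by (rule mult_mono[OF K_dom[OF s]]) (use K_dom[OF s] in auto)
    then show ?thesis by (simp add: abs_mult[symmetric] right_diff_distrib)
  qed
  have "\<bar>hammerstein a b K F h x t - hammerstein a b K F h y t\<bar>
      = norm (integral {a..b} (\<lambda>s. K t s * F s (x s) - K t s * F s (y s)))"
    unfolding hammerstein_def using integral_diff[OF integrable[OF xc] integrable[OF yc]] by simp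
  also have "\<dots> \<le> integral {a..b} (\<lambda>s. M s * (c * d))"
    by (rule integral_norm_bound_integral[OF integrable_diff[OF integrable[OF xc] integrable[OF yc]]
        integrable_on_mult_left[OF M]]) (simp add: pointwise)
  also have "\<dots> = c * d * integral {a..b} M"
    by (simp add: mult.commute)
  finally show ?thesis .
qed

lemma bound_from_SUP_integral:
  fixes G :: "real \<Rightarrow> real \<Rightarrow> real"
  assumes Gc: "continuous_on ({a..b} \<times> {a..b}) (\<lambda>(t, s). G t s)" and c: "c \<ge> 0"
    and sup: "c * (SUP t\<in>{a..b}. integral {a..b} (G t)) \<le> B" and t: "t \<in> {a..b}"
  shows "c * integral {a..b} (G t) \<le> B"
proof -
  have "continuous_on {a..b} (\<lambda>t. integral {a..b} (G t))"
    using integral_continuous_on_param[of _ a b G] Gc by (simp add: cbox_interval)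
  then have "bdd_above ((\<lambda>t. integral {a..b} (G t)) ` {a..b})"
    by (intro bounded_imp_bdd_above compact_imp_bounded compact_continuous_image compact_Icc)
  then have "integral {a..b} (G t) \<le> (SUP t\<in>{a..b}. integral {a..b} (G t))"
    by (rule cSUP_upper[OF t])
  then show ?thesis using mult_left_mono[OF _ c] sup by (meson order_trans)
qed

text \<open>Kernels of opposite signs: when K1 \<ge> 0 \<ge> K2, the kernel K1 + K2 is dominated by
  K1 - K2.\<close>
lemma hammerstein_signed_kernel_contraction:
  assumes ab: "a \<le> b"
    and K1c: "continuous_on ({a..b} \<times> {a..b}) (\<lambda>(t, s). K1 t s)"
    and K2c: "continuous_on ({a..b} \<times> {a..b}) (\<lambda>(t, s). K2 t s)"
    and K1pos: "\<And>t s. t \<in> {a..b} \<Longrightarrow> s \<in> {a..b} \<Longrightarrow> K1 t s \<ge> 0"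
    and K2neg: "\<And>t s. t \<in> {a..b} \<Longrightarrow> s \<in> {a..b} \<Longrightarrow> K2 t s \<le> 0"
    and Fc: "continuous_on ({a..b} \<times> UNIV) (\<lambda>(s, u). F s u)"
    and F_lip: "\<And>s u v. s \<in> {a..b} \<Longrightarrow> \<bar>F s u - F s v\<bar> \<le> L / 2 * \<bar>u - v\<bar>" and L: "L \<ge> 0"
    and mass: "L * (SUP t\<in>{a..b}. integral {a..b} (\<lambda>s. K1 t s - K2 t s)) \<le> 1"
    and xc: "continuous_on {a..b} x" and yc: "continuous_on {a..b} y" and t: "t \<in> {a..b}"
    and dist: "\<forall>s\<in>{a..b}. dist (x s) (y s) \<le> d"
  shows "dist (hammerstein a b (\<lambda>t s. K1 t s + K2 t s) F h x t)
              (hammerstein a b (\<lambda>t s. K1 t s + K2 t s) F h y t) \<le> 1 / 2 * d"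
proof -
  have Kc: "continuous_on ({a..b} \<times> {a..b}) (\<lambda>(t, s). K1 t s + K2 t s)"
    using continuous_on_add[OF K1c K2c] by (simp add: case_prod_beta)
  have K_diff_c: "continuous_on ({a..b} \<times> {a..b}) (\<lambda>(t, s). K1 t s - K2 t s)"
    using continuous_on_diff[OF K1c K2c] by (simp add: case_prod_beta)
  have K_dom: "\<bar>K1 t s + K2 t s\<bar> \<le> K1 t s - K2 t s" if "s \<in> {a..b}" for s
    using K1pos[OF t that] K2neg[OF t that] by (simp add: abs_le_iff)
  have M: "(\<lambda>s. K1 t s - K2 t s) integrable_on {a..b}"
    by (rule integrable_continuous_interval[OF continuous_on_section[OF K_diff_c t]])
  have "a \<in> {a..b}" using ab by simp
  then have d: "d \<ge> 0" using order_trans[OF zero_le_dist] dist by blast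
  have "dist (hammerstein a b (\<lambda>t s. K1 t s + K2 t s) F h x t)
             (hammerstein a b (\<lambda>t s. K1 t s + K2 t s) F h y t)
      \<le> L / 2 * d * integral {a..b} (\<lambda>s. K1 t s - K2 t s)"
    using hammerstein_lipschitz[OF Kc Fc xc yc t F_lip _ K_dom M] dist L
    by (simp add: dist_real_def)
  also have "\<dots> = d / 2 * (L * integral {a..b} (\<lambda>s. K1 t s - K2 t s))" by simp
  also have "\<dots> \<le> d / 2"
    using mult_left_mono[OF bound_from_SUP_integral[OF K_diff_c L mass t]] d by simp
  finally show ?thesis by simp
qed

theorem theorem3p1:
  fixes a b lam mu :: real
    and \<theta> :: "real \<Rightarrow> real"
    and K1 K2 f g :: "real \<Rightarrow> real \<Rightarrow> real"
    and h :: "real \<Rightarrow> real"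
  assumes ab: "a \<le> b"
    and K1c: "continuous_on ({a..b} \<times> {a..b}) (\<lambda>(t, s). K1 t s)"
    and K2c: "continuous_on ({a..b} \<times> {a..b}) (\<lambda>(t, s). K2 t s)"
    and hc: "continuous_on {a..b} h"
    and fc: "continuous_on ({a..b} \<times> UNIV) (\<lambda>(t, x). f t x)"
    and gc: "continuous_on ({a..b} \<times> UNIV) (\<lambda>(t, x). g t x)"
    and K1pos: "\<forall>t\<in>{a..b}. \<forall>s\<in>{a..b}. K1 t s \<ge> 0"
    and K2neg: "\<forall>t\<in>{a..b}. \<forall>s\<in>{a..b}. K2 t s \<le> 0"
    and theta: "Theta_class \<theta>"
    and lam: "lam > 0" and mu: "mu > 0"
    and fL: "\<forall>t\<in>{a..b}. \<forall>x y. x \<ge> y \<longrightarrow>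
               0 \<le> f t x - f t y \<and> f t x - f t y \<le> lam * \<theta> (x - y)"
    and gL: "\<forall>t\<in>{a..b}. \<forall>x y. x \<ge> y \<longrightarrow>
               - mu * \<theta> (x - y) \<le> g t x - g t y \<and> g t x - g t y \<le> 0"
    and sup: "(lam + mu) * (SUP t\<in>{a..b}. integral {a..b} (\<lambda>s. K1 t s - K2 t s)) \<le> 1"
    and lu: "\<exists>\<alpha> \<beta>. coupled_lower_upper a b K1 K2 f g h \<alpha> \<beta>"
  shows "\<exists>x. is_solution a b K1 K2 f g h x \<and>
           (\<forall>y. is_solution a b K1 K2 f g h y \<longrightarrow> (\<forall>t\<in>{a..b}. y t = x t))"
proof -
  define F where "F s u = f s u + g s u" for s u
  let ?H = "hammerstein a b (\<lambda>t s. K1 t s + K2 t s) F h"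
  have Kc: "continuous_on ({a..b} \<times> {a..b}) (\<lambda>(t, s). K1 t s + K2 t s)"
    using continuous_on_add[OF K1c K2c] by (simp add: case_prod_beta)
  have Fc: "continuous_on ({a..b} \<times> UNIV) (\<lambda>(s, u). F s u)"
    unfolding F_def using continuous_on_add[OF fc gc] by (simp add: case_prod_beta)
  have F_lip: "\<bar>F s u - F s v\<bar> \<le> (lam + mu) / 2 * \<bar>u - v\<bar>" if "s \<in> {a..b}" for s u v
    unfolding F_def using lam mu Theta_class_bounds[OF theta]
    by (intro monotone_sum_lipschitz[where \<theta> = \<theta>] fL[rule_format, OF that] gL[rule_format, OF that])
      auto
  have solution_iff: "is_solution a b K1 K2 f g h x \<longleftrightarrow>
      continuous_on {a..b} x \<and> (\<forall>t\<in>{a..b}. x t = ?H x t)" for x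
    unfolding is_solution_def hammerstein_def F_def ..
  have "\<exists>x. continuous_on {a..b} x \<and> (\<forall>t\<in>{a..b}. x t = ?H x t) \<and>
      (\<forall>y. continuous_on {a..b} y \<and> (\<forall>t\<in>{a..b}. y t = ?H y t) \<longrightarrow> (\<forall>t\<in>{a..b}. y t = x t))"
  proof (rule interval_contraction_fixed_point[OF ab, where q = "1 / 2"])
    show "continuous_on {a..b} (?H x)" if "continuous_on {a..b} x" for x
      by (rule hammerstein_continuous[OF Kc Fc hc that])
    show "?H x t = ?H y t" if "\<forall>s\<in>{a..b}. x s = y s" for x y t
      by (rule hammerstein_local[OF that])
  qed (use hammerstein_signed_kernel_contraction[OF ab K1c K2c K1pos[rule_format]
        K2neg[rule_format] Fc F_lip _ sup] lam mu in auto)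
  then show ?thesis unfolding solution_iff by (simp only: conj_assoc)
qed

end
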